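(* For every $n\in\mathbb{N}$, $$a_{n,-n}=\frac{n\,a_{1,-1}^{\,n}}{6^{n-1}},\qquad a_{n,n}=\frac{n\,a_{1,1}^{\,n}}{6^{n-1}}.$$ Equivalently, $\sum_{n\ge0}\Theta^na_{n,-n}x^n=1+\dfrac{b_{1,-1}x}{(1-b_{1,-1}x/6)^2}$ with $b_{1,-1}=\Theta a_{1,-1}$.
   Context: Let $\varepsilon\in\{\pm1\}$, $b\in\mathbb{R}\setminus\{0\}$, $a\in\mathbb{C}$, and consider the degenerate third Painlevé equation $u''=\frac{(u')^2}{u}-\frac{u'}{\tau}+\frac1\tau(-8\varepsilon u^2+2ab)+\frac{b^2}{u}$. Put $\theta(\tau)=3^{3/2}(\varepsilon b)^{1/3}\tau^{2/3}$, $\Theta=3^{3/4}(\varepsilon b)^{1/6}$ (so $\theta=\Theta^2\tau^{2/3}$) and $\alpha=2i\sqrt3\,a$. Let $\varkappa\in\mathbb{C}$ with $|\mathrm{Re}\,\varkappa|<1/2$ and $w=\tau^{2\varkappa/3}e^{i\theta(\tau)}$. Consider the (general-solution) asymptotic expansion $$u(\tau)=\frac{\varepsilon(\varepsilon b)^{2/3}}{2}\tau^{1/3}\Big(1+\sum_{k=1}^{\infty}\tau^{-k/3}\sum_{j=-k}^{k}a_{k,j}w^j\Big),\qquad \mathrm{Re}\,\tau\to+\infty,\ |\mathrm{Im}\,\theta(\tau)|<\delta,$$ where $a_{1,0}=0$, $a_{1,1}a_{1,-1}=-\dfrac{i\varkappa}{\sqrt3(\varepsilon b)^{1/3}}$ (equivalently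 $\Theta^2a_{1,1}a_{1,-1}=-3i\varkappa$), and all remaining coefficients $a_{k,j}$ are uniquely determined by $a_{1,1},a_{1,-1},a,b,\varepsilon$ via formal substitution of the expansion into the equation; set $a_{0,0}=1$. *)

theory Defs
  imports Complex_Main
begin

(* Conventions.
   t = tau powr (1/3);  w = tau^(2 kappa/3) * exp(i theta(tau)),  theta = Theta^2 * t^2.
   (eps b)^(1/3) is the real cube root  root 3 (eps*b).
   A "formal series with top exponent N" is  f :: nat => int => complex, standing for
     sum_k sum_j  f k j * t^(N - k) * w^j ,
   where t and w are treated as independent formal variables (formal substitution);
   all series below satisfy  f k j = 0  for |j| > k. *)

definition pIII_C :: "real \<Rightarrow> real \<Rightarrow> complex" where
  "pIII_C eps b = complex_of_real (eps * (root 3 (eps * b))\<^sup>2 / 2)"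

definition pIII_Theta2 :: "real \<Rightarrow> real \<Rightarrow> complex" where
  "pIII_Theta2 eps b = complex_of_real (3 * sqrt 3 * root 3 (eps * b))"

text \<open>The series S = 1 + sum over k of t^(-k) sum_{j=-k..k} a k j w^j (top exponent 0).\<close>
definition ansatz_S :: "(nat \<Rightarrow> int \<Rightarrow> complex) \<Rightarrow> nat \<Rightarrow> int \<Rightarrow> complex" where
  "ansatz_S a k j = (if k = 0 then (if j = 0 then 1 else 0)
                     else if \<bar>j\<bar> \<le> int k then a k j else 0)"

text \<open>Product of formal series (top exponents add); valid for series with f k j = 0 when |j| > k.\<close>
definition fs_mult :: "(nat \<Rightarrow> int \<Rightarrow> complex) \<Rightarrow> (nat \<Rightarrow> int \<Rightarrow> complex) \<Rightarrow> nat \<Rightarrow> int \<Rightarrow> complex" where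
  "fs_mult f g k j = (\<Sum>k1\<le>k. \<Sum>j1\<in>{- int k1..int k1}. f k1 j1 * g (k - k1) (j - j1))"

text \<open>The Euler operator tau d/dtau acting on a series with top exponent N (result has top
  exponent N+2):  tau d/dtau (t^m w^j) = ((m + 2 kappa j)/3 + (2 i/3) Theta^2 j t^2) t^m w^j.\<close>
definition fs_euler :: "complex \<Rightarrow> complex \<Rightarrow> int \<Rightarrow> (nat \<Rightarrow> int \<Rightarrow> complex) \<Rightarrow> nat \<Rightarrow> int \<Rightarrow> complex" where
  "fs_euler Th2 kap N f k j =
     2 * \<i> / 3 * Th2 * of_int j * f k j
     + (if 2 \<le> k then (of_int N - of_nat (k - 2) + 2 * kap * of_int j) / 3 * f (k - 2) j else 0)"

text \<open>Coefficient of t^(6-k) w^j in  u E^2 u - (E u)^2 + tau (8 eps u^3 - 2 a b u - b^2 tau),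
  where E = tau d/dtau, tau = t^3 and u = C t S.  This expression is tau^2 u times
  (u'' - u'^2/u + u'/tau - (-8 eps u^2 + 2 a b)/tau - b^2/u), so its vanishing is the
  degenerate Painleve III equation.\<close>
definition pIII_residual :: "real \<Rightarrow> real \<Rightarrow> complex \<Rightarrow> complex \<Rightarrow> (nat \<Rightarrow> int \<Rightarrow> complex) \<Rightarrow> nat \<Rightarrow> int \<Rightarrow> complex" where
  "pIII_residual eps b aa kap a k j =
     (let Th2 = pIII_Theta2 eps b;
          u = (\<lambda>k j. pIII_C eps b * ansatz_S a k j);
          Eu = fs_euler Th2 kap 1 u;
          EEu = fs_euler Th2 kap 3 Eu
      in fs_mult u EEu k j - fs_mult Eu Eu k j
         + 8 * of_real eps * fs_mult u (fs_mult u u) k j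
         - (if 2 \<le> k then 2 * aa * of_real b * u (k - 2) j else 0)
         - (if k = 0 \<and> j = 0 then of_real (b\<^sup>2) else 0))"

end

theory Submission
  imports Defs "HOL-Computational_Algebra.Formal_Power_Series"
begin

(* On the rays j = s k (s = 1 or -1) the expansion decouples from everything else: products
   of series truncated by f k j = 0 for |j| > k restrict there to Cauchy products, and only the
   Theta^2 part of the Euler operator survives, acting as (2 i/3) Theta^2 s x d/dx.  Hence the
   generating function X(x) = 1 + sum_k a_{k,sk} x^k satisfies, independently of the parameter
   a, of kappa and of the off-diagonal coefficients, the equation 3 (X th^2 X - (th X)^2) = X^3 - 1
   with th = x d/dx (fps_XD).  Linearising at order n produces the factor 3 (n^2 - 1), so a solution with
   X(0) = 1 is fixed by its linear coefficient; 1 + 6 c x / (1 - c x)^2 with c = a_{1,s}/6 is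
   one, and its coefficients are 6 n c^n. *)

lemma fps_XD_diff [simp]: "fps_XD (a - b) = fps_XD a - fps_XD (b :: 'a::comm_ring_1 fps)"
  by (simp add: fps_XD_def algebra_simps)

lemma fps_XD_const [simp]: "fps_XD (fps_const (c :: 'a::comm_ring_1)) = 0"
  by (simp add: fps_XD_def)

lemma fps_XD_one [simp]: "fps_XD (1 :: 'a::comm_ring_1 fps) = 0"
  by (simp add: fps_XD_def)

lemma fps_XD_numeral [simp]: "fps_XD (numeral k :: 'a::comm_ring_1 fps) = 0"
  by (simp add: fps_XD_def)

lemma fps_XD_fps_X [simp]: "fps_XD (fps_X :: 'a::comm_ring_1 fps) = fps_X"
  by (simp add: fps_XD_def)

lemma fps_XD_mult [simp]: "fps_XD (a * b) = fps_XD a * b + a * fps_XD (b :: 'a::comm_ring_1 fps)"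
  by (simp add: fps_XD_def algebra_simps)

lemma fps_XD_power:
  "fps_XD (a ^ Suc n) = of_nat (Suc n) * a ^ n * fps_XD (a :: 'a::comm_ring_1 fps)"
  by (induction n) (simp_all add: algebra_simps)

lemma fps_XD_mult_power_eq:
  fixes Y L P :: "'a::comm_ring_1 fps"
  assumes "Y * L ^ k = P"
  shows "fps_XD Y * L ^ Suc k = L * fps_XD P - of_nat k * P * fps_XD L"
proof -
  have power: "fps_XD (L ^ k) * L = of_nat k * L ^ k * fps_XD L"
  proof (cases k)
    case (Suc m)
    then show ?thesis by (simp only: fps_XD_power) (simp add: algebra_simps)
  qed simp
  have "L * fps_XD P = fps_XD Y * L ^ Suc k + Y * (fps_XD (L ^ k) * L)"
    by (simp add: algebra_simps flip: assms)
  also have "\<dots> = fps_XD Y * L ^ Suc k + of_nat k * P * fps_XD L"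
    by (simp only: power flip: assms) (simp add: algebra_simps)
  finally show ?thesis
    by (simp add: algebra_simps)
qed

lemma fps_numeral_mult_nth:
  "fps_nth (numeral k * f) n = numeral k * fps_nth (f :: 'a::comm_semiring_1 fps) n"
  by (simp add: numeral_fps_const)

lemma fps_mult_nth_low_zero:
  fixes G D :: "'a::comm_semiring_1 fps"
  assumes "\<forall>m<n. fps_nth D m = 0"
  shows "fps_nth (G * D) n = fps_nth G 0 * fps_nth D n"
proof -
  have "fps_nth (G * D) n = (\<Sum>i=0..n. fps_nth G i * fps_nth D (n - i))"
    by (rule fps_mult_nth)
  also have "\<dots> = fps_nth G 0 * fps_nth D n + (\<Sum>i=1..n. fps_nth G i * fps_nth D (n - i))"
    by (simp add: sum.atLeast_Suc_atMost)
  also have "(\<Sum>i=1..n. fps_nth G i * fps_nth D (n - i)) = 0"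
    using assms by (intro sum.neutral) auto
  finally show ?thesis by simp
qed

definition diagonal_ode :: "'a::comm_ring_1 fps \<Rightarrow> 'a fps" where
  "diagonal_ode Z = 3 * (Z * fps_XD (fps_XD Z) - fps_XD Z ^ 2) - Z ^ 3"

lemma diagonal_ode_add_nth:
  fixes Z D :: "'a::comm_ring_1 fps"
  assumes "fps_nth Z 0 = 1" and "n > 0" and low: "\<forall>m<n. fps_nth D m = 0"
  shows "fps_nth (diagonal_ode (Z + D)) n
    = fps_nth (diagonal_ode Z) n + 3 * (of_nat n ^ 2 - 1) * fps_nth D n"
proof -
  have "fps_nth D 0 = 0" using assms by simp
  have low': "\<forall>m<n. fps_nth (fps_XD D) m = 0" "\<forall>m<n. fps_nth (fps_XD (fps_XD D)) m = 0"
    using low by simp_all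
  have "diagonal_ode (Z + D) - diagonal_ode Z =
      3 * (Z * fps_XD (fps_XD D)) + 3 * (fps_XD (fps_XD Z) * D) + 3 * (fps_XD (fps_XD D) * D)
      - 6 * (fps_XD Z * fps_XD D) - 3 * (fps_XD D * fps_XD D)
      - 3 * (Z * Z * D) - 3 * (Z * D * D) - D * D * D"
    unfolding diagonal_ode_def by (simp add: algebra_simps power2_eq_square power3_eq_cube)
  also have "fps_nth \<dots> n = 3 * (of_nat n ^ 2 - 1) * fps_nth D n"
    unfolding fps_sub_nth fps_add_nth fps_numeral_mult_nth fps_mult_nth_low_zero[OF low]
      fps_mult_nth_low_zero[OF low'(1)] fps_mult_nth_low_zero[OF low'(2)]
    using assms \<open>fps_nth D 0 = 0\<close> by (simp add: algebra_simps power2_eq_square)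
  finally show ?thesis by (simp add: algebra_simps)
qed

lemma diagonal_ode_unique:
  fixes Z W :: "'a::{idom, ring_char_0} fps"
  assumes "fps_nth Z 0 = 1" and "fps_nth W 0 = 1" and "fps_nth Z 1 = fps_nth W 1"
    and "diagonal_ode Z = diagonal_ode W"
  shows "Z = W"
proof (rule fps_ext)
  fix n
  show "fps_nth Z n = fps_nth W n"
  proof (induction n rule: less_induct)
    case (less n)
    show ?case
    proof (cases "n \<le> 1")
      case True
      then show ?thesis using assms by (auto simp: le_Suc_eq)
    next
      case False
      define D where "D = Z - W"
      have "\<forall>m<n. fps_nth D m = 0"
        using less by (simp add: D_def)
      then have "fps_nth (diagonal_ode (W + D)) n
          = fps_nth (diagonal_ode W) n + 3 * (of_nat n ^ 2 - 1) * fps_nth D n"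
        using assms(2) False by (intro diagonal_ode_add_nth) auto
      then have "3 * (of_nat n ^ 2 - 1) * fps_nth D n = 0"
        using assms(4) by (simp add: D_def)
      moreover have "(of_nat n ^ 2 - 1 :: 'a) \<noteq> 0"
      proof
        assume "(of_nat n ^ 2 - 1 :: 'a) = 0"
        then have "n ^ 2 = 1"
          by (metis eq_iff_diff_eq_0 of_nat_1 of_nat_eq_iff of_nat_power)
        then show False using False by simp
      qed
      ultimately show ?thesis by (simp add: D_def)
    qed
  qed
qed

definition diagonal_solution :: "'a::comm_ring_1 \<Rightarrow> 'a fps" where
  "diagonal_solution c = 1 + Abs_fps (\<lambda>m. 6 * of_nat m * c ^ m)"

lemma diagonal_solution_mult:
  fixes c :: "'a::comm_ring_1"
  shows "(diagonal_solution c - 1) * (1 - fps_const c * fps_X) ^ 2 = fps_const (6 * c) * fps_X"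
proof -
  define Z where "Z = diagonal_solution c - 1"
  have "Z * (1 - fps_const c * fps_X) ^ 2
      = Z - fps_const (2 * c) * (fps_X * Z) + fps_const (c ^ 2) * (fps_X * (fps_X * Z))"
    unfolding fps_const_mult[symmetric] fps_const_power[symmetric] numeral_fps_const[symmetric]
    by (simp add: algebra_simps power2_eq_square)
  also have "\<dots> = fps_const (6 * c) * fps_X"
  proof (rule fps_ext)
    fix n :: nat
    consider "n = 0" | "n = 1" | k where "n = k + 2"
      by (metis One_nat_def add_2_eq_Suc' not0_implies_Suc)
    then show "fps_nth (Z - fps_const (2 * c) * (fps_X * Z) + fps_const (c ^ 2) * (fps_X * (fps_X * Z))) n
        = fps_nth (fps_const (6 * c) * fps_X) n"
      by cases (simp_all add: Z_def diagonal_solution_def algebra_simps power2_eq_square)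
  qed
  finally show ?thesis by (simp add: Z_def)
qed

lemma diagonal_solution_ode:
  fixes c :: "'a::idom"
  shows "diagonal_ode (diagonal_solution c) = -1"
proof -
  define Y where "Y = diagonal_solution c"
  define L where "L = 1 - fps_const c * fps_X"
  define A where "A = L ^ 2 - 6 * L + 6"
  define B where "B = L * fps_XD A - 2 * A * fps_XD L"
  define C where "C = L * fps_XD B - 3 * B * fps_XD L"
  have XD_L: "fps_XD L = L - 1"
    by (simp add: L_def)
  have "fps_const (6 * c) * fps_X = 6 * (1 - L)"
    unfolding L_def fps_const_mult[symmetric] numeral_fps_const[symmetric] by (simp add: algebra_simps)
  then have "(Y - 1) * L ^ 2 = 6 * (1 - L)"
    using diagonal_solution_mult[of c, folded L_def] by (simp add: Y_def)
  then have YA: "Y * L ^ 2 = A"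
    unfolding A_def by (simp add: algebra_simps)
  have YB: "fps_XD Y * L ^ 3 = B"
    using fps_XD_mult_power_eq[OF YA] by (simp add: B_def numeral_3_eq_3)
  have YC: "fps_XD (fps_XD Y) * L ^ 4 = C"
    using fps_XD_mult_power_eq[OF YB] by (simp add: C_def numeral_3_eq_3 eval_nat_numeral)
  have "L ^ 6 * (diagonal_ode Y + 1) = 3 * (A * C - B ^ 2) - A ^ 3 + L ^ 6"
    unfolding diagonal_ode_def YA[symmetric] YB[symmetric] YC[symmetric]
    by (simp add: algebra_simps eval_nat_numeral)
  also have "\<dots> = 0"
    unfolding C_def B_def A_def by (simp add: XD_L power2_eq_square) algebra
  finally have "L ^ 6 * (diagonal_ode Y + 1) = 0" .
  moreover have "fps_nth L 0 = 1"
    by (simp add: L_def)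
  then have "L \<noteq> 0"
    by auto
  ultimately show ?thesis
    by (simp add: Y_def eq_neg_iff_add_eq_0)
qed

definition fs_supported :: "(nat \<Rightarrow> int \<Rightarrow> 'a::zero) \<Rightarrow> bool" where
  "fs_supported f \<longleftrightarrow> (\<forall>k j. int k < \<bar>j\<bar> \<longrightarrow> f k j = 0)"

definition fs_diagonal :: "int \<Rightarrow> (nat \<Rightarrow> int \<Rightarrow> 'a) \<Rightarrow> 'a fps" where
  "fs_diagonal s f = Abs_fps (\<lambda>k. f k (s * int k))"

lemma fs_supported_ansatz_S: "fs_supported (\<lambda>k j. C * ansatz_S a k j)"
  unfolding fs_supported_def ansatz_S_def by auto

lemma fs_supported_euler: "fs_supported f \<Longrightarrow> fs_supported (fs_euler T kap N f)"
  unfolding fs_supported_def fs_euler_def by auto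

lemma fs_supported_mult:
  assumes "fs_supported g"
  shows "fs_supported (fs_mult f g)"
  unfolding fs_supported_def
proof (intro allI impI)
  fix k :: nat and j :: int
  assume "int k < \<bar>j\<bar>"
  then have "g (k - k1) (j - j1) = 0" if "k1 \<le> k" and "\<bar>j1\<bar> \<le> int k1" for k1 j1
    using assms that unfolding fs_supported_def by simp
  then show "fs_mult f g k j = 0"
    unfolding fs_mult_def by (intro sum.neutral ballI) auto
qed

lemma fs_diagonal_mult:
  assumes "\<bar>s\<bar> = 1" and "fs_supported g"
  shows "fs_diagonal s (fs_mult f g) = fs_diagonal s f * fs_diagonal s g"
proof (rule fps_ext)
  fix n
  have s_cases: "s = 1 \<or> s = -1"
    using assms(1) by arith
  have inner: "(\<Sum>j\<in>{- int k..int k}. f k j * g (n - k) (s * int n - j))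
      = f k (s * int k) * g (n - k) (s * int (n - k))" if "k \<le> n" for k
  proof -
    have "g (n - k) (s * int n - j) = 0" if "\<bar>j\<bar> \<le> int k" and "j \<noteq> s * int k" for j
    proof -
      have "int (n - k) < \<bar>s * int n - j\<bar>"
        using s_cases \<open>k \<le> n\<close> that by (elim disjE) auto
      then show ?thesis
        using assms(2) unfolding fs_supported_def by blast
    qed
    then have "(\<Sum>j\<in>{- int k..int k}. f k j * g (n - k) (s * int n - j))
        = (\<Sum>j\<in>{s * int k}. f k j * g (n - k) (s * int n - j))"
      using s_cases by (intro sum.mono_neutral_right) auto
    then show ?thesis
      using that by (simp add: algebra_simps)
  qed
  show "fps_nth (fs_diagonal s (fs_mult f g)) n = fps_nth (fs_diagonal s f * fs_diagonal s g) n"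
    unfolding fs_diagonal_def fs_mult_def fps_mult_nth fps_nth_Abs_fps atMost_atLeast0
    by (intro sum.cong) (simp_all add: inner)
qed

lemma fs_diagonal_euler:
  assumes "\<bar>s\<bar> = 1" and "fs_supported f"
  shows "fs_diagonal s (fs_euler T kap N f)
    = fps_const (2 * \<i> / 3 * T * of_int s) * fps_XD (fs_diagonal s f)"
proof (rule fps_ext)
  fix n
  have "2 \<le> n \<Longrightarrow> f (n - 2) (s * int n) = 0"
    using assms unfolding fs_supported_def by (auto simp: abs_mult)
  then show "fps_nth (fs_diagonal s (fs_euler T kap N f)) n
      = fps_nth (fps_const (2 * \<i> / 3 * T * of_int s) * fps_XD (fs_diagonal s f)) n"
    by (simp add: fs_diagonal_def fs_euler_def)
qed

lemma pIII_constant_relations: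
  assumes "eps = 1 \<or> eps = -1"
  shows "pIII_C eps b ^ 2 * (2 * \<i> / 3 * pIII_Theta2 eps b) ^ 2 = - 3 * of_real (b ^ 2)"
    and "8 * of_real eps * pIII_C eps b ^ 3 = of_real (b ^ 2)"
proof -
  define r where "r = root 3 (eps * b)"
  have "eps ^ 2 = 1"
    using assms by auto
  have "r ^ 6 = (r ^ 3) ^ 2"
    by (simp flip: power_mult)
  also have "r ^ 3 = eps * b"
    unfolding r_def by (simp add: odd_real_root_pow)
  finally have r6: "r ^ 6 = b ^ 2"
    using \<open>eps ^ 2 = 1\<close> by (simp add: power_mult_distrib)
  have C: "pIII_C eps b = of_real (eps * r ^ 2 / 2)"
    unfolding pIII_C_def r_def ..
  have "pIII_Theta2 eps b ^ 2 = of_real ((3 * sqrt 3 * r) ^ 2)"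
    unfolding pIII_Theta2_def r_def[symmetric] by (rule of_real_power[symmetric])
  also have "(3 * sqrt 3 * r) ^ 2 = 27 * r ^ 2"
    by (simp add: power_mult_distrib)
  finally have "(2 * \<i> / 3 * pIII_Theta2 eps b) ^ 2 = of_real (- 12 * r ^ 2)"
    by (simp add: power_mult_distrib power_divide)
  then have "pIII_C eps b ^ 2 * (2 * \<i> / 3 * pIII_Theta2 eps b) ^ 2
      = of_real ((eps * r ^ 2 / 2) ^ 2 * (- 12 * r ^ 2))"
    unfolding C by simp
  also have "(eps * r ^ 2 / 2) ^ 2 * (- 12 * r ^ 2) = - 3 * eps ^ 2 * r ^ 6"
    by (simp add: power_mult_distrib power_divide eval_nat_numeral)
  finally show "pIII_C eps b ^ 2 * (2 * \<i> / 3 * pIII_Theta2 eps b) ^ 2 = - 3 * of_real (b ^ 2)"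
    using \<open>eps ^ 2 = 1\<close> r6 by simp
  have "8 * of_real eps * pIII_C eps b ^ 3 = of_real ((eps ^ 2) ^ 2 * r ^ 6)"
    unfolding pIII_C_def r_def[symmetric]
    by (simp add: power_mult_distrib power_divide eval_nat_numeral)
  then show "8 * of_real eps * pIII_C eps b ^ 3 = of_real (b ^ 2)"
    using \<open>eps ^ 2 = 1\<close> r6 by simp
qed

lemma fs_diagonal_pIII_residual:
  assumes eps: "eps = 1 \<or> eps = -1" and s: "\<bar>s\<bar> = 1"
  shows "fs_diagonal s (pIII_residual eps b aa kap a)
    = - fps_const (of_real (b ^ 2)) * (diagonal_ode (fs_diagonal s (ansatz_S a)) + 1)"
proof -
  define C where "C = pIII_C eps b"
  define c where "c = 2 * \<i> / 3 * pIII_Theta2 eps b * of_int s"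
  define u where "u = (\<lambda>k j. C * ansatz_S a k j)"
  define Eu where "Eu = fs_euler (pIII_Theta2 eps b) kap 1 u"
  define EEu where "EEu = fs_euler (pIII_Theta2 eps b) kap 3 Eu"
  define X where "X = fs_diagonal s (ansatz_S a)"
  have supp_u: "fs_supported u"
    unfolding u_def by (rule fs_supported_ansatz_S)
  have supp_Eu: "fs_supported Eu"
    unfolding Eu_def using supp_u by (rule fs_supported_euler)
  have supp_EEu: "fs_supported EEu"
    unfolding EEu_def using supp_Eu by (rule fs_supported_euler)
  have supp_uu: "fs_supported (fs_mult u u)"
    using supp_u by (rule fs_supported_mult)
  have diag_u: "fs_diagonal s u = fps_const C * X"
    by (rule fps_ext) (simp add: fs_diagonal_def u_def X_def)
  have diag_Eu: "fs_diagonal s Eu = fps_const (c * C) * fps_XD X"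
    unfolding Eu_def fs_diagonal_euler[OF s supp_u] diag_u c_def by simp
  have diag_EEu: "fs_diagonal s EEu = fps_const (c * c * C) * fps_XD (fps_XD X)"
    unfolding EEu_def fs_diagonal_euler[OF s supp_Eu] diag_Eu c_def[symmetric]
    by (simp add: mult.assoc [symmetric])
  \<comment> \<open>the 2 a b u term is shifted by t^2 off the diagonal; b^2 sits at k = 0\<close>
  have "fs_diagonal s (pIII_residual eps b aa kap a)
      = fs_diagonal s (fs_mult u EEu) - fs_diagonal s (fs_mult Eu Eu)
        + fps_const (8 * of_real eps) * fs_diagonal s (fs_mult u (fs_mult u u)) - fps_const (of_real (b ^ 2))"
    using s by (intro fps_ext)
      (auto simp: fs_diagonal_def pIII_residual_def Let_def u_def Eu_def EEu_def C_def ansatz_S_def abs_mult)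
  also have "\<dots> = fps_const (C ^ 2 * c ^ 2) * (X * fps_XD (fps_XD X) - fps_XD X ^ 2)
        + fps_const (8 * of_real eps * C ^ 3) * X ^ 3 - fps_const (of_real (b ^ 2))"
    unfolding fs_diagonal_mult[OF s supp_EEu] fs_diagonal_mult[OF s supp_Eu]
      fs_diagonal_mult[OF s supp_uu] fs_diagonal_mult[OF s supp_u] diag_u diag_Eu diag_EEu
    by (simp add: algebra_simps power2_eq_square power3_eq_cube flip: fps_const_mult)
  also have "c ^ 2 = (2 * \<i> / 3 * pIII_Theta2 eps b) ^ 2"
    using s by (cases "s = 1") (auto simp: c_def power_mult_distrib abs_if split: if_splits)
  also have "C ^ 2 * \<dots> = - 3 * of_real (b ^ 2)"
    using pIII_constant_relations(1)[OF eps, of b] by (simp add: C_def)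
  also have "8 * of_real eps * C ^ 3 = of_real (b ^ 2)"
    using pIII_constant_relations(2)[OF eps, of b] by (simp add: C_def)
  finally show ?thesis
    unfolding diagonal_ode_def X_def[symmetric]
    by (simp add: algebra_simps flip: fps_const_mult fps_const_neg numeral_fps_const)
qed

lemma pIII_diagonal_coefficients:
  assumes eps: "eps = 1 \<or> eps = -1" and b: "b \<noteq> 0" and s: "\<bar>s\<bar> = 1"
    and residual: "\<forall>k j. pIII_residual eps b aa kap a k j = 0" and n: "n \<ge> 1"
  shows "a n (s * int n) = of_nat n * a 1 s ^ n / 6 ^ (n - 1)"
proof -
  define X where "X = fs_diagonal s (ansatz_S a)"
  define Y where "Y = diagonal_solution (a 1 s / 6)"
  have "fs_diagonal s (pIII_residual eps b aa kap a) = 0"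
    using residual by (simp add: fs_diagonal_def fps_zero_def)
  then have "fps_const (of_real (b ^ 2)) * (diagonal_ode X + 1) = 0"
    unfolding fs_diagonal_pIII_residual[OF eps s] X_def by simp
  then have ode: "diagonal_ode X = diagonal_ode Y"
    using b by (simp add: Y_def diagonal_solution_ode eq_neg_iff_add_eq_0)
  have "X = Y"
  proof (rule diagonal_ode_unique)
    show "fps_nth X 0 = 1"
      by (simp add: X_def fs_diagonal_def ansatz_S_def)
    show "fps_nth Y 0 = 1"
      by (simp add: Y_def diagonal_solution_def)
    show "fps_nth X 1 = fps_nth Y 1"
      using s by (simp add: X_def Y_def fs_diagonal_def ansatz_S_def diagonal_solution_def)
  qed (rule ode)
  have "a n (s * int n) = fps_nth X n"
    using n s by (simp add: X_def fs_diagonal_def ansatz_S_def abs_mult)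
  also have "\<dots> = fps_nth Y n"
    by (simp add: \<open>X = Y\<close>)
  also have "\<dots> = of_nat n * a 1 s ^ n / 6 ^ (n - 1)"
    using n by (cases n) (simp_all add: Y_def diagonal_solution_def field_simps)
  finally show ?thesis .
qed

theorem mainTheorem6:
  fixes eps b :: real and aa kap :: complex and a :: "nat \<Rightarrow> int \<Rightarrow> complex"
  assumes "eps = 1 \<or> eps = -1"
    and "b \<noteq> 0"
    and "\<bar>Re kap\<bar> < 1/2"
    and "a 1 0 = 0"
    and "pIII_Theta2 eps b * a 1 1 * a 1 (-1) = - 3 * \<i> * kap"
    and "\<forall>k j. pIII_residual eps b aa kap a k j = 0"
  shows "\<forall>n::nat. n \<ge> 1 \<longrightarrow>
           a n (- int n) = of_nat n * a 1 (-1) ^ n / 6 ^ (n - 1) \<and>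
           a n (int n) = of_nat n * a 1 1 ^ n / 6 ^ (n - 1)"
proof (intro allI impI conjI)
  fix n :: nat
  assume "n \<ge> 1"
  show "a n (- int n) = of_nat n * a 1 (-1) ^ n / 6 ^ (n - 1)"
    using pIII_diagonal_coefficients[OF assms(1,2) _ assms(6) \<open>n \<ge> 1\<close>, of "-1"] by simp
  show "a n (int n) = of_nat n * a 1 1 ^ n / 6 ^ (n - 1)"
    using pIII_diagonal_coefficients[OF assms(1,2) _ assms(6) \<open>n \<ge> 1\<close>, of 1] by simp
qed

end
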